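(* Let $\eta(y)=\sum_{k=0}^\infty M_k y^{(k)}$ be a finite order differential operator on $\mathcal{P}_c$ (i.e. $M_k\equiv 0$ for all $k>r$ for some $r\in\mathbb{N}$), let $p=(p_n)_{n\in\mathbb{N}_0}$ be a polynomial sequence and $d\in\widetilde{D}$ with $\eta p_n=d_np_n$ for all $n\in\mathbb{N}_0$. Let $d'\in\widetilde{D}$ with $d'\neq d$ and $d'_k=d_k$ for all but finitely many $k$. Then any formal differential operator $\widetilde{\eta}$ with $\widetilde{\eta}p_n=d'_np_n$ for all $n\in\mathbb{N}_0$ is of infinite order, i.e. it is not a finite order differential operator.
   Context: $\mathcal{P}_c$ is the space of polynomials in one real variable with complex coefficients. A formal differential operator is a map $\mathcal{P}_c\to\mathcal{P}_c$, $y\mapsto\sum_{k=0}^\infty M_k y^{(k)}$ (a finite sum on each polynomial), where $M_k$ are complex polynomials with $\deg M_k\le k$ and $M_0$ constant. A polynomial sequence (PS) is $p=(p_n)_{n\in\mathbb{N}_0}$ with $p_0\equiv1$ and $\deg p_n=n$. $\widetilde{D}$ is the set of non-constant sequences $(d_n)_{n\in\mathbb{N}_0}$ of non-zero complex numbers. *)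

theory Defs
  imports "HOL-Computational_Algebra.Polynomial"
begin

definition formal_diff_op :: "(nat \<Rightarrow> complex poly) \<Rightarrow> bool" where
  "formal_diff_op M \<longleftrightarrow> (\<forall>k. degree (M k) \<le> k)"

text \<open>Action on a polynomial: the sum over k of M k times the k-th derivative
  (finite, since derivatives of order > degree y vanish).\<close>
definition apply_fdo :: "(nat \<Rightarrow> complex poly) \<Rightarrow> complex poly \<Rightarrow> complex poly" where
  "apply_fdo M y = (\<Sum>k\<le>degree y. M k * (pderiv ^^ k) y)"

definition finite_order :: "(nat \<Rightarrow> complex poly) \<Rightarrow> bool" where
  "finite_order M \<longleftrightarrow> (\<exists>r. \<forall>k>r. M k = 0)"

definition poly_seq :: "(nat \<Rightarrow> complex poly) \<Rightarrow> bool" where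
  "poly_seq p \<longleftrightarrow> p 0 = 1 \<and> (\<forall>n. degree (p n) = n)"

definition Dtilde :: "(nat \<Rightarrow> complex) set" where
  "Dtilde = {d. (\<forall>n. d n \<noteq> 0) \<and> (\<exists>m n. d m \<noteq> d n)}"

end

theory Submission
  imports Defs
begin

text \<open>
  The difference \<open>N = M' - M\<close> is a formal differential operator of finite order, and
  \<open>N p\<^sub>n = (d'\<^sub>n - d\<^sub>n) p\<^sub>n = 0\<close> for all but finitely many \<open>n\<close>. But a nonzero operator of finite
  order kills no polynomial of large degree: if \<open>l\<close> is the least amount \<open>k - j\<close> by which a
  term \<open>x^j y^(k)\<close> of \<open>N\<close> lowers degrees, then the coefficient of \<open>x^(n-l)\<close> in \<open>N y\<close>, for
  \<open>deg y = n \<ge> r\<close> (\<open>r\<close> the order of \<open>N\<close>), is the leading coefficient of \<open>y\<close> times \<open>Q(n)\<close>, where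
  \<open>Q = \<Sum>\<^sub>k\<^sub>\<le>\<^sub>r [x^(k-l)] N\<^sub>k \<cdot> x(x-1)\<cdots>(x-k+1)\<close> is nonzero; and \<open>Q\<close> has only finitely many
  roots. Hence \<open>N = 0\<close>, which forces \<open>d' = d\<close>.
\<close>

definition falling_poly :: "nat \<Rightarrow> 'a::comm_ring_1 poly" where
  "falling_poly k = (\<Prod>i<k. [:of_nat i + 1 - of_nat k, 1:])"

lemma degree_falling_poly: "degree (falling_poly k :: 'a::idom poly) = k"
  unfolding falling_poly_def by (subst degree_prod_eq_sum_degree) auto

lemma coeff_falling_poly_degree: "coeff (falling_poly k :: 'a::idom poly) k = 1"
proof -
  have "lead_coeff (falling_poly k :: 'a poly) = 1"
    unfolding falling_poly_def lead_coeff_prod by simp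
  then show ?thesis by (simp only: degree_falling_poly)
qed

lemma poly_falling_poly_of_nat:
  assumes "k \<le> n"
  shows "poly (falling_poly k) (of_nat n :: 'a::comm_ring_1) = pochhammer (of_nat (n - k + 1)) k"
  unfolding falling_poly_def poly_prod pochhammer_prod atLeast0LessThan using assms
  by (intro prod.cong refl) (simp add: of_nat_diff algebra_simps)

lemma apply_fdo_diff:
  "apply_fdo (\<lambda>k. A k - B k) y = apply_fdo A y - apply_fdo B y"
  unfolding apply_fdo_def by (simp add: sum_subtractf left_diff_distrib)

lemma coeff_mult_higher_pderiv_top:
  fixes P y :: "'a::idom poly"
  assumes drop: "\<And>j. coeff P j \<noteq> 0 \<Longrightarrow> l + j \<le> k"
    and deg: "degree y = n" and "k \<le> n"
  shows "coeff (P * (pderiv ^^ k) y) (n - l) =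
    coeff P (k - l) * pochhammer (of_nat (n - k + 1)) k * coeff y n"
proof -
  have vanish: "coeff P i * coeff ((pderiv ^^ k) y) (n - l - i) = 0"
    if "i \<le> n - l" "i \<noteq> k - l" for i
  proof (cases "coeff P i = 0")
    case False
    with drop that have "n < n - l - i + k" by fastforce
    then show ?thesis using deg by (simp add: coeff_higher_pderiv coeff_eq_0 add.commute)
  qed simp
  have main: "coeff P (k - l) * coeff ((pderiv ^^ k) y) (n - l - (k - l)) =
      coeff P (k - l) * pochhammer (of_nat (n - k + 1)) k * coeff y n"
  proof (cases "coeff P (k - l) = 0")
    case False
    with drop have "l \<le> k" by fastforce
    with \<open>k \<le> n\<close> have "n - l - (k - l) = n - k" "n - k + k = n" by auto
    then show ?thesis by (simp add: coeff_higher_pderiv)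
  qed simp
  have "coeff (P * (pderiv ^^ k) y) (n - l) =
      (\<Sum>i\<le>n - l. coeff P i * coeff ((pderiv ^^ k) y) (n - l - i))"
    by (rule coeff_mult)
  also have "\<dots> = coeff P (k - l) * coeff ((pderiv ^^ k) y) (n - l - (k - l))
      + (\<Sum>i\<in>{..n - l} - {k - l}. coeff P i * coeff ((pderiv ^^ k) y) (n - l - i))"
    using \<open>k \<le> n\<close> by (subst sum.remove[of _ "k - l"]) auto
  also have "(\<Sum>i\<in>{..n - l} - {k - l}. coeff P i * coeff ((pderiv ^^ k) y) (n - l - i)) = 0"
    using vanish by (intro sum.neutral) blast
  finally show ?thesis using main by simp
qed

definition indicial_poly :: "(nat \<Rightarrow> complex poly) \<Rightarrow> nat \<Rightarrow> nat \<Rightarrow> complex poly" where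
  "indicial_poly N l r = (\<Sum>k\<le>r. smult (coeff (N k) (k - l)) (falling_poly k))"

lemma coeff_apply_fdo_indicial_poly:
  assumes drop: "\<And>k j. coeff (N k) j \<noteq> 0 \<Longrightarrow> l + j \<le> k"
    and order: "\<And>k. r < k \<Longrightarrow> N k = 0"
    and deg: "degree y = n" and "r \<le> n"
  shows "coeff (apply_fdo N y) (n - l) = coeff y n * poly (indicial_poly N l r) (of_nat n)"
proof -
  have "coeff (apply_fdo N y) (n - l) = (\<Sum>k\<le>n. coeff (N k * (pderiv ^^ k) y) (n - l))"
    unfolding apply_fdo_def deg by (simp add: coeff_sum)
  also have "\<dots> = (\<Sum>k\<le>n. coeff (N k) (k - l) * pochhammer (of_nat (n - k + 1)) k * coeff y n)"
    by (intro sum.cong refl coeff_mult_higher_pderiv_top drop deg) auto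
  also have "\<dots> = (\<Sum>k\<le>r. coeff (N k) (k - l) * pochhammer (of_nat (n - k + 1)) k * coeff y n)"
    by (rule sum.mono_neutral_right) (use \<open>r \<le> n\<close> order in auto)
  also have "\<dots> = coeff y n * poly (indicial_poly N l r) (of_nat n)"
    unfolding indicial_poly_def poly_sum sum_distrib_left using \<open>r \<le> n\<close>
    by (intro sum.cong refl) (simp add: poly_falling_poly_of_nat)
  finally show ?thesis .
qed

lemma indicial_poly_nonzero:
  assumes "k \<le> r" and "coeff (N k) (k - l) \<noteq> 0"
  shows "indicial_poly N l r \<noteq> 0"
proof -
  define K where "K = Max {k. k \<le> r \<and> coeff (N k) (k - l) \<noteq> 0}"
  have K: "K \<le> r" "coeff (N K) (K - l) \<noteq> 0"
    and above_K: "\<And>k. k \<le> r \<Longrightarrow> K < k \<Longrightarrow> coeff (N k) (k - l) = 0"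
    using Max_in[of "{k. k \<le> r \<and> coeff (N k) (k - l) \<noteq> 0}"]
      Max_ge[of "{k. k \<le> r \<and> coeff (N k) (k - l) \<noteq> 0}"] assms
    unfolding K_def by fastforce+
  have below_K: "coeff (falling_poly k :: complex poly) K = 0" if "k < K" for k
    using that by (simp add: coeff_eq_0 degree_falling_poly)
  have others: "coeff (N k) (k - l) * coeff (falling_poly k) K = 0" if "k \<le> r" "k \<noteq> K" for k
    using that below_K above_K by (cases "k < K") auto
  have "coeff (indicial_poly N l r) K = (\<Sum>k\<le>r. coeff (N k) (k - l) * coeff (falling_poly k) K)"
    unfolding indicial_poly_def by (simp add: coeff_sum)
  also have "\<dots> = coeff (N K) (K - l)"
    using K by (subst sum.remove[of _ K])
      (auto simp: coeff_falling_poly_degree others intro!: sum.neutral)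
  finally show ?thesis using K by auto
qed

lemma formal_diff_op_least_drop:
  assumes "formal_diff_op N" and "\<exists>k. N k \<noteq> 0"
  shows "\<exists>l k. coeff (N k) (k - l) \<noteq> 0 \<and> (\<forall>k j. coeff (N k) j \<noteq> 0 \<longrightarrow> l + j \<le> k)"
proof -
  have below_order: "j \<le> k" if "coeff (N k) j \<noteq> 0" for k j
    using le_degree[OF that] assms(1) unfolding formal_diff_op_def by (meson order_trans)
  from assms(2) obtain k j where "coeff (N k) j \<noteq> 0" by (meson leading_coeff_0_iff)
  then have ex: "\<exists>l k j. coeff (N k) j \<noteq> 0 \<and> l = k - j" by blast
  define l where "l = (LEAST l. \<exists>k j. coeff (N k) j \<noteq> 0 \<and> l = k - j)"
  obtain k0 j0 where kj0: "coeff (N k0) j0 \<noteq> 0" "l = k0 - j0"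
    using LeastI_ex[of "\<lambda>l. \<exists>k j. coeff (N k) j \<noteq> 0 \<and> l = k - j"] ex unfolding l_def by blast
  have "l + j \<le> k" if "coeff (N k) j \<noteq> 0" for k j
  proof -
    have "l \<le> k - j" unfolding l_def by (rule Least_le) (use that in blast)
    then show ?thesis using below_order[OF that] by simp
  qed
  moreover have "k0 - l = j0" using kj0 below_order[OF kj0(1)] by simp
  ultimately show ?thesis using kj0(1) by metis
qed

lemma apply_fdo_nonzero_of_large_degree:
  assumes "formal_diff_op N" and "finite_order N" and "\<exists>k. N k \<noteq> 0"
  shows "\<exists>n0. \<forall>y. n0 \<le> degree y \<longrightarrow> apply_fdo N y \<noteq> 0"
proof -
  obtain r where order: "\<And>k. r < k \<Longrightarrow> N k = 0"
    using assms(2) unfolding finite_order_def by blast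
  obtain l k where k: "coeff (N k) (k - l) \<noteq> 0"
    and drop: "\<And>k j. coeff (N k) j \<noteq> 0 \<Longrightarrow> l + j \<le> k"
    using formal_diff_op_least_drop[OF assms(1,3)] by blast
  have "k \<le> r" using k order by (metis coeff_0 not_le)
  define Q where "Q = indicial_poly N l r"
  have "Q \<noteq> 0" unfolding Q_def using \<open>k \<le> r\<close> k by (rule indicial_poly_nonzero)
  then have "finite (of_nat -` {x. poly Q x = 0} :: nat set)"
    by (intro finite_vimageI poly_roots_finite inj_of_nat)
  then obtain m where roots: "\<And>n. poly Q (of_nat n) = 0 \<Longrightarrow> n \<le> m"
    unfolding finite_nat_set_iff_bounded_le by blast
  show ?thesis
  proof (intro exI[of _ "Suc (max m r)"] allI impI)
    fix y :: "complex poly" assume large: "Suc (max m r) \<le> degree y"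
    then have "r \<le> degree y" by simp
    moreover have "poly Q (of_nat (degree y)) \<noteq> 0" using large roots by force
    moreover have "y \<noteq> 0" using large by auto
    ultimately have "coeff (apply_fdo N y) (degree y - l) \<noteq> 0"
      using coeff_apply_fdo_indicial_poly[OF drop order refl] unfolding Q_def by simp
    then show "apply_fdo N y \<noteq> 0" by auto
  qed
qed

lemma poly_seq_nonzero:
  assumes "poly_seq p" shows "p n \<noteq> 0"
proof
  assume "p n = 0"
  with assms have "n = 0" unfolding poly_seq_def by (metis degree_0)
  with \<open>p n = 0\<close> assms show False unfolding poly_seq_def by simp
qed

theorem proposition2:
  fixes M M' :: "nat \<Rightarrow> complex poly" and p :: "nat \<Rightarrow> complex poly"
    and d d' :: "nat \<Rightarrow> complex"
  assumes "formal_diff_op M" and "finite_order M"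
    and "poly_seq p"
    and "d \<in> Dtilde"
    and "\<And>n. apply_fdo M (p n) = smult (d n) (p n)"
    and "d' \<in> Dtilde" and "d' \<noteq> d" and "finite {k. d' k \<noteq> d k}"
    and "formal_diff_op M'"
    and "\<And>n. apply_fdo M' (p n) = smult (d' n) (p n)"
  shows "\<not> finite_order M'"
proof
  assume "finite_order M'"
  define N where "N k = M' k - M k" for k
  have N_p: "apply_fdo N (p n) = smult (d' n - d n) (p n)" for n
    unfolding N_def apply_fdo_diff assms(5,10) by (simp add: smult_diff_left)
  have "formal_diff_op N"
    using assms(1,9) unfolding formal_diff_op_def N_def by (meson degree_diff_le)
  moreover have "finite_order N"
    using assms(2) \<open>finite_order M'\<close> unfolding finite_order_def N_def
    by (metis diff_zero max.strict_boundedE)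
  moreover have "\<exists>k. N k \<noteq> 0"
  proof (rule ccontr)
    assume "\<nexists>k. N k \<noteq> 0"
    then have "d' n - d n = 0" for n
      using N_p[of n] poly_seq_nonzero[OF assms(3)] by (simp add: apply_fdo_def)
    then show False using assms(7) by auto
  qed
  ultimately obtain n0 where n0: "\<And>y. n0 \<le> degree y \<Longrightarrow> apply_fdo N y \<noteq> 0"
    using apply_fdo_nonzero_of_large_degree by blast
  obtain m where "\<And>k. d' k \<noteq> d k \<Longrightarrow> k \<le> m"
    using assms(8) unfolding finite_nat_set_iff_bounded_le by auto
  then have "apply_fdo N (p (max n0 (Suc m))) = 0" using N_p by fastforce
  moreover have "degree (p (max n0 (Suc m))) = max n0 (Suc m)"
    using assms(3) unfolding poly_seq_def by blast
  ultimately show False using n0 by fastforce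
qed

end
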